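(* A Borel measurable function $f:\mathbb{R}^n\to\mathbb{R}$ is level convex if and only if for every $d\ge1$, every open set $\Omega\subseteq\mathbb{R}^d$, every Borel probability measure $\mu$ on $\mathbb{R}^d$ supported on $\Omega$ and every $\varphi\in L^1_\mu(\Omega;\mathbb{R}^n)$, $$f\Big(\int_\Omega\varphi\,d\mu\Big)\le\mu\text{-}\operatorname*{ess\,sup}_{x\in\Omega}f(\varphi(x)).$$ In particular, if $f$ is level convex and $\Omega$ has finite positive Lebesgue measure, then $f\big(\frac{1}{|\Omega|}\int_\Omega\varphi\,dx\big)\le\operatorname{ess\,sup}_{x\in\Omega}f(\varphi(x))$ for every $\varphi\in L^1(\Omega;\mathbb{R}^n)$.
   Context: Level convex: $f(\lambda\xi+(1-\lambda)\eta)\le\max\{f(\xi),f(\eta)\}$ for all $\xi,\eta\in\mathbb{R}^n$ and $\lambda\in(0,1)$. $\mu\text{-}\operatorname{ess\,sup}$ denotes the essential supremum with respect to $\mu$. *)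

theory Defs
  imports "HOL-Probability.Probability"
begin

definition level_convex :: "('a::real_vector \<Rightarrow> real) \<Rightarrow> bool" where
  "level_convex f \<longleftrightarrow>
     (\<forall>\<xi> \<eta>. \<forall>t::real. 0 < t \<and> t < 1 \<longrightarrow>
        f (t *\<^sub>R \<xi> + (1 - t) *\<^sub>R \<eta>) \<le> max (f \<xi>) (f \<eta>))"

text \<open>Explicit model of R^d (d varies inside the statement): functions on the index set
  {..<d} (extensional, i.e. undefined outside), with the product topology of the
  Euclidean line, the Borel product measure, and Lebesgue measure = its completion.\<close>
definition Rd_top :: "nat \<Rightarrow> (nat \<Rightarrow> real) topology" where
  "Rd_top d = product_topology (\<lambda>_. euclideanreal) {..<d}"

definition Rd_borel :: "nat \<Rightarrow> (nat \<Rightarrow> real) measure" where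
  "Rd_borel d = (\<Pi>\<^sub>M i\<in>{..<d}. lborel)"

definition Rd_lebesgue :: "nat \<Rightarrow> (nat \<Rightarrow> real) measure" where
  "Rd_lebesgue d = completion (Rd_borel d)"

end

theory Submission imports Defs begin

text \<open>
  Level convexity of \<open>f\<close> means that all sublevel sets \<open>{y. f y \<le> c}\<close> are convex, so the
  inequality reduces to the fact that the barycenter of a probability measure lies in every
  convex set carrying the measure. That fact is proved by induction on the affine dimension
  of the convex set: if the barycenter misses its relative interior, a supporting hyperplane
  through the barycenter contains almost all of the mass, and one passes to the lower
  dimensional face. Conversely, two-point measures on the line turn the inequality back
  into the definition of level convexity.
\<close>

lemma convex_supporting_hyperplane_not_in_rel_interior:
  fixes m :: "'a::euclidean_space"
  assumes C: "convex C" "C \<noteq> {}" and m: "m \<notin> rel_interior C"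
  obtains a where "\<And>y. y \<in> C \<Longrightarrow> a \<bullet> m \<le> a \<bullet> y" and "\<exists>y\<in>C. a \<bullet> m < a \<bullet> y"
proof -
  have "rel_interior C \<noteq> {}" using C rel_interior_eq_empty by blast
  then obtain a b where aff: "m + a \<in> affine hull (insert m (rel_interior C))"
    and "a \<noteq> 0" and "a \<bullet> m \<le> b" and ge_b: "\<And>u. u \<in> rel_interior C \<Longrightarrow> b \<le> a \<bullet> u"
    using separating_hyperplane_set_point_inaff[of "rel_interior C" m] m
      convex_rel_interior[OF C(1)] by blast
  have "closure (rel_interior C) \<subseteq> {y. b \<le> a \<bullet> y}"
    using ge_b by (intro closure_minimal subsetI) (auto simp: closed_halfspace_ge)
  then have "C \<subseteq> {y. b \<le> a \<bullet> y}"
    using closure_subset convex_closure_rel_interior[OF C(1)] by blast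
  with \<open>a \<bullet> m \<le> b\<close> have le: "a \<bullet> m \<le> a \<bullet> y" if "y \<in> C" for y
    using that by (meson mem_Collect_eq order_trans subsetD)
  moreover have "\<exists>y\<in>C. a \<bullet> m < a \<bullet> y"
  proof (rule ccontr)
    assume "\<not> ?thesis"
    with le have "a \<bullet> y = a \<bullet> m" if "y \<in> C" for y
      using that by (meson antisym not_le)
    then have "insert m (rel_interior C) \<subseteq> {y. a \<bullet> y = a \<bullet> m}"
      using rel_interior_subset by blast
    then have "affine hull (insert m (rel_interior C)) \<subseteq> {y. a \<bullet> y = a \<bullet> m}"
      by (simp add: affine_hyperplane hull_minimal)
    with aff have "a \<bullet> (m + a) = a \<bullet> m" by blast
    then have "a \<bullet> a = 0" by (simp add: inner_add_right)
    with \<open>a \<noteq> 0\<close> show False by simp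
  qed
  ultimately show thesis by (rule that)
qed

lemma aff_dim_Int_hyperplane_less:
  fixes C :: "'a::euclidean_space set"
  assumes "y \<in> C" "a \<bullet> y \<noteq> b"
  shows "aff_dim (C \<inter> {x. a \<bullet> x = b}) < aff_dim C"
proof (rule aff_dim_psubset)
  have "affine hull (C \<inter> {x. a \<bullet> x = b}) \<subseteq> {x. a \<bullet> x = b}"
    by (intro hull_minimal) (auto simp: affine_hyperplane)
  moreover have "affine hull (C \<inter> {x. a \<bullet> x = b}) \<subseteq> affine hull C" by (intro hull_mono) blast
  moreover have "y \<in> affine hull C" using assms(1) by (rule hull_inc)
  moreover have "y \<notin> {x. a \<bullet> x = b}" using assms(2) by simp
  ultimately show "affine hull (C \<inter> {x. a \<bullet> x = b}) \<subset> affine hull C"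
    by (metis psubsetI subsetD)
qed

lemma (in prob_space) AE_eq_integral_if_AE_ge_integral:
  fixes g :: "'a \<Rightarrow> real"
  assumes g: "integrable M g" and ge: "AE x in M. integral\<^sup>L M g \<le> g x"
  shows "AE x in M. g x = integral\<^sup>L M g"
proof -
  have int: "integrable M (\<lambda>x. g x - integral\<^sup>L M g)" using g by simp
  have "integral\<^sup>L M (\<lambda>x. g x - integral\<^sup>L M g) = 0"
    using g prob_space by (simp add: Bochner_Integration.integral_diff)
  moreover have "AE x in M. 0 \<le> g x - integral\<^sup>L M g" using ge by auto
  ultimately show ?thesis using integral_nonneg_eq_0_iff_AE[OF int] by simp
qed

lemma (in prob_space) integral_in_convex:
  fixes \<phi> :: "'a \<Rightarrow> 'b::euclidean_space"
  assumes \<phi>: "integrable M \<phi>" and "convex C" and "AE x in M. \<phi> x \<in> C"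
  shows "integral\<^sup>L M \<phi> \<in> C"
  using assms(2,3)
proof (induction "nat (aff_dim C + 1)" arbitrary: C rule: less_induct)
  case less
  define m where "m = integral\<^sup>L M \<phi>"
  have "C \<noteq> {}" using less.prems(2) AE_False by force
  show ?case
  proof (cases "m \<in> rel_interior C")
    case True
    then show ?thesis using rel_interior_subset m_def by blast
  next
    case False
    then obtain a where ge: "\<And>y. y \<in> C \<Longrightarrow> a \<bullet> m \<le> a \<bullet> y" and "\<exists>y\<in>C. a \<bullet> m < a \<bullet> y"
      using convex_supporting_hyperplane_not_in_rel_interior less.prems(1) \<open>C \<noteq> {}\<close> by blast
    define C' where "C' = C \<inter> {y. a \<bullet> y = a \<bullet> m}"
    have "aff_dim C' < aff_dim C"
      unfolding C'_def using \<open>\<exists>y\<in>C. a \<bullet> m < a \<bullet> y\<close> aff_dim_Int_hyperplane_less by fastforce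
    then have smaller: "nat (aff_dim C' + 1) < nat (aff_dim C + 1)"
      using aff_dim_geq[of C'] by linarith
    have int_a\<phi>: "integral\<^sup>L M (\<lambda>x. a \<bullet> \<phi> x) = a \<bullet> m"
      unfolding m_def using \<phi> by (simp add: integral_inner_right)
    have "AE x in M. a \<bullet> m \<le> a \<bullet> \<phi> x" using less.prems(2) ge by auto
    then have "AE x in M. a \<bullet> \<phi> x = a \<bullet> m"
      using AE_eq_integral_if_AE_ge_integral[OF integrable_inner_right[OF \<phi>, of a]]
      unfolding int_a\<phi> by blast
    with less.prems(2) have "AE x in M. \<phi> x \<in> C'" unfolding C'_def by auto
    moreover have "convex C'" unfolding C'_def by (intro convex_Int less.prems(1) convex_hyperplane)
    ultimately have "m \<in> C'" using less.hyps[OF smaller] m_def by blast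
    then show ?thesis unfolding C'_def m_def by blast
  qed
qed

lemma level_convex_convex_sublevel:
  assumes "level_convex f"
  shows "convex {y. f y \<le> c}"
proof (rule convexI)
  fix x y and u v :: real
  assume xy: "x \<in> {y. f y \<le> c}" "y \<in> {y. f y \<le> c}" and uv: "0 \<le> u" "0 \<le> v" "u + v = 1"
  show "u *\<^sub>R x + v *\<^sub>R y \<in> {y. f y \<le> c}"
  proof (cases "u = 0 \<or> v = 0")
    case True
    then show ?thesis using xy uv by auto
  next
    case False
    then have "0 < u" "u < 1" "v = 1 - u" using uv by auto
    then have "f (u *\<^sub>R x + v *\<^sub>R y) \<le> max (f x) (f y)"
      using assms unfolding level_convex_def by blast
    then show ?thesis using xy by simp
  qed
qed

lemma (in prob_space) level_convex_integral_le:
  fixes \<phi> :: "'a \<Rightarrow> 'b::euclidean_space"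
  assumes "level_convex f" "integrable M \<phi>" "AE x in M. f (\<phi> x) \<le> c"
  shows "f (integral\<^sup>L M \<phi>) \<le> c"
  using integral_in_convex[OF assms(2) level_convex_convex_sublevel[OF assms(1)]] assms(3) by simp

lemma (in prob_space) level_convex_integral_le_esssup:
  fixes \<phi> :: "'a \<Rightarrow> 'b::euclidean_space"
  assumes lc: "level_convex f" and \<phi>: "integrable M \<phi>"
  shows "ereal (f (integral\<^sup>L M \<phi>)) \<le> esssup M (\<lambda>x. ereal (f (\<phi> x)))"
proof -
  have ae: "AE x in M. ereal (f (\<phi> x)) \<le> esssup M (\<lambda>x. ereal (f (\<phi> x)))" by (rule esssup_AE)
  show ?thesis
  proof (cases "esssup M (\<lambda>x. ereal (f (\<phi> x)))" rule: ereal_cases)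
    case (real c)
    with ae level_convex_integral_le[OF lc \<phi>, of c] show ?thesis by simp
  next
    case MInf
    with ae AE_False show ?thesis by simp
  qed simp
qed

text \<open>The integrand is \<open>indicator \<Omega> x *\<^sub>R \<phi> x\<close> rather than \<open>\<phi>\<close>: set integrability
  gives no measurability of \<open>\<phi>\<close> outside \<open>\<Omega>\<close>.\<close>
lemma integral_uniform_measure_indicator:
  fixes \<phi> :: "'a \<Rightarrow> 'b::{banach, second_countable_topology}"
  assumes pos: "0 < emeasure L \<Omega>" and fin: "emeasure L \<Omega> < \<infinity>"
    and \<phi>: "set_integrable L \<Omega> \<phi>"
  shows "integrable (uniform_measure L \<Omega>) (\<lambda>x. indicator \<Omega> x *\<^sub>R \<phi> x)"
    and "integral\<^sup>L (uniform_measure L \<Omega>) (\<lambda>x. indicator \<Omega> x *\<^sub>R \<phi> x)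
           = (1 / measure L \<Omega>) *\<^sub>R (LINT x:\<Omega>|L. \<phi> x)"
proof -
  have \<Omega>: "\<Omega> \<in> sets L" using pos emeasure_notin_sets by force
  define m where "m = measure L \<Omega>"
  have em: "emeasure L \<Omega> = ennreal m" using fin unfolding m_def by (simp add: emeasure_eq_ennreal_measure)
  have "m > 0" using pos em by (metis ennreal_less_zero_iff)
  define \<psi> where "\<psi> x = indicator \<Omega> x *\<^sub>R \<phi> x" for x
  have \<psi>: "integrable L \<psi>" using \<phi> unfolding set_integrable_def \<psi>_def .
  have \<psi>_meas: "\<psi> \<in> borel_measurable L" using \<psi> by (rule borel_measurable_integrable)
  have dens_meas: "(\<lambda>x. indicator \<Omega> x / m) \<in> borel_measurable L" using \<Omega> by measurable
  have dens_nonneg: "AE x in L. 0 \<le> indicator \<Omega> x / m" using \<open>m > 0\<close> by simp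
  have U: "uniform_measure L \<Omega> = density L (\<lambda>x. ennreal (indicator \<Omega> x / m))"
    unfolding uniform_measure_def
  proof (rule density_cong)
    show "(\<lambda>x. indicator \<Omega> x / emeasure L \<Omega>) \<in> borel_measurable L" using \<Omega> by measurable
    show "(\<lambda>x. ennreal (indicator \<Omega> x / m)) \<in> borel_measurable L" using \<Omega> by measurable
    show "AE x in L. indicator \<Omega> x / emeasure L \<Omega> = ennreal (indicator \<Omega> x / m)"
      using \<open>m > 0\<close>
      by (intro AE_I2) (auto simp: em indicator_def divide_ennreal ennreal_1[symmetric] simp del: ennreal_1)
  qed
  have weighted: "(\<lambda>x. (indicator \<Omega> x / m) *\<^sub>R \<psi> x) = (\<lambda>x. (1 / m) *\<^sub>R \<psi> x)"
    unfolding \<psi>_def by (auto simp: indicator_def fun_eq_iff)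
  show "integrable (uniform_measure L \<Omega>) (\<lambda>x. indicator \<Omega> x *\<^sub>R \<phi> x)"
    unfolding U \<psi>_def[symmetric]
    by (subst integrable_density[OF \<psi>_meas dens_meas dens_nonneg]) (use \<psi> in \<open>simp add: weighted\<close>)
  show "integral\<^sup>L (uniform_measure L \<Omega>) (\<lambda>x. indicator \<Omega> x *\<^sub>R \<phi> x)
          = (1 / measure L \<Omega>) *\<^sub>R (LINT x:\<Omega>|L. \<phi> x)"
    unfolding U \<psi>_def[symmetric] m_def[symmetric]
    by (subst integral_density[OF \<psi>_meas dens_meas dens_nonneg])
      (unfold weighted integral_scaleR_right, simp add: set_lebesgue_integral_def \<psi>_def)
qed

lemma level_convex_average_le_esssup:
  fixes \<phi> :: "'b \<Rightarrow> 'a::euclidean_space"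
  assumes lc: "level_convex f"
    and pos: "0 < emeasure L \<Omega>" and fin: "emeasure L \<Omega> < \<infinity>"
    and \<phi>: "set_integrable L \<Omega> \<phi>"
  shows "ereal (f ((1 / measure L \<Omega>) *\<^sub>R (LINT x:\<Omega>|L. \<phi> x)))
           \<le> esssup (restrict_space L \<Omega>) (\<lambda>x. ereal (f (\<phi> x)))"
proof -
  have \<Omega>: "\<Omega> \<in> sets L" using pos emeasure_notin_sets by force
  interpret U: prob_space "uniform_measure L \<Omega>"
    using pos fin by (intro prob_space_uniform_measure) auto
  let ?E = "esssup (restrict_space L \<Omega>) (\<lambda>x. ereal (f (\<phi> x)))"
  have "AE x in restrict_space L \<Omega>. ereal (f (\<phi> x)) \<le> ?E" by (rule esssup_AE)
  then have ae: "AE x in L. x \<in> \<Omega> \<longrightarrow> ereal (f (\<phi> x)) \<le> ?E"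
    using AE_restrict_space_iff[of \<Omega> L] \<Omega> by simp
  show ?thesis
  proof (cases ?E rule: ereal_cases)
    case (real c)
    have "AE x in uniform_measure L \<Omega>. f (indicator \<Omega> x *\<^sub>R \<phi> x) \<le> c"
      using pos fin ae real by (subst AE_uniform_measure) (auto elim!: AE_mp)
    from U.level_convex_integral_le[OF lc integral_uniform_measure_indicator(1)[OF pos fin \<phi>] this]
    show ?thesis using real integral_uniform_measure_indicator(2)[OF pos fin \<phi>] by simp
  next
    case MInf
    with ae have "AE x in L. x \<notin> \<Omega>" by simp
    then have "emeasure L \<Omega> = 0"
      using AE_iff_measurable[OF \<Omega>, of "\<lambda>x. x \<notin> \<Omega>"] sets.sets_into_space[OF \<Omega>] by auto
    with pos show ?thesis by simp
  qed simp
qed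

lemma integral_completion_distr_bernoulli_pmf:
  fixes \<phi> :: "'b \<Rightarrow> 'c::{banach, second_countable_topology}"
  assumes g: "g \<in> measure_pmf (bernoulli_pmf t) \<rightarrow>\<^sub>M B" and t: "0 \<le> t" "t \<le> 1"
    and \<phi>: "\<phi> \<in> borel_measurable B"
  shows "integrable (completion (distr (bernoulli_pmf t) B g)) \<phi>"
    and "integral\<^sup>L (completion (distr (bernoulli_pmf t) B g)) \<phi>
           = t *\<^sub>R \<phi> (g True) + (1 - t) *\<^sub>R \<phi> (g False)"
proof -
  let ?\<mu> = "distr (bernoulli_pmf t) B g"
  have \<phi>_meas: "\<phi> \<in> borel_measurable ?\<mu>" using \<phi> by simp
  have "integrable ?\<mu> \<phi>"
    by (subst integrable_distr_eq[OF g \<phi>]) (simp add: integrable_measure_pmf_finite)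
  then show "integrable (completion ?\<mu>) \<phi>" using integrable_completion[OF \<phi>_meas] by simp
  have "integral\<^sup>L (completion ?\<mu>) \<phi> = integral\<^sup>L (bernoulli_pmf t) (\<lambda>b. \<phi> (g b))"
    by (simp add: integral_completion[OF \<phi>_meas] integral_distr[OF g \<phi>])
  also have "\<dots> = (\<Sum>b\<in>UNIV. pmf (bernoulli_pmf t) b *\<^sub>R \<phi> (g b))"
    by (rule integral_measure_pmf) auto
  finally show "integral\<^sup>L (completion ?\<mu>) \<phi> = t *\<^sub>R \<phi> (g True) + (1 - t) *\<^sub>R \<phi> (g False)"
    using t by (simp add: UNIV_bool)
qed

lemma esssup_completion_distr_bernoulli_pmf_le:
  fixes h :: "'b \<Rightarrow> ereal"
  assumes g: "g \<in> measure_pmf (bernoulli_pmf t) \<rightarrow>\<^sub>M B" and h: "h \<in> borel_measurable B"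
  shows "esssup (completion (distr (bernoulli_pmf t) B g)) h \<le> max (h (g True)) (h (g False))"
proof (rule esssup_I)
  show "h \<in> borel_measurable (completion (distr (bernoulli_pmf t) B g))"
    using h by (intro measurable_completion) simp
  have "{x \<in> space B. h x \<le> max (h (g True)) (h (g False))} \<in> sets B" using h by measurable
  moreover have "AE b in bernoulli_pmf t. h (g b) \<le> max (h (g True)) (h (g False))"
    by (intro AE_I2) (metis max.cobounded1 max.cobounded2)
  ultimately have "AE x in distr (bernoulli_pmf t) B g. h x \<le> max (h (g True)) (h (g False))"
    by (subst AE_distr_iff[OF g]) auto
  then show "AE x in completion (distr (bernoulli_pmf t) B g). h x \<le> max (h (g True)) (h (g False))"
    by (rule AE_completion)
qed

lemma level_convex_if_esssup_bound_on_line: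
  fixes f :: "'a::euclidean_space \<Rightarrow> real"
  assumes f: "f \<in> borel_measurable borel"
    and H: "\<And>\<Omega> (\<mu>::(nat \<Rightarrow> real) measure) (\<phi>::(nat \<Rightarrow> real) \<Rightarrow> 'a).
                openin (Rd_top 1) \<Omega> \<Longrightarrow> prob_space \<mu> \<Longrightarrow> sets \<mu> = sets (Rd_borel 1) \<Longrightarrow>
                emeasure \<mu> \<Omega> = 1 \<Longrightarrow> integrable (completion \<mu>) \<phi> \<Longrightarrow>
                ereal (f (integral\<^sup>L (completion \<mu>) \<phi>))
                  \<le> esssup (completion \<mu>) (\<lambda>x. ereal (f (\<phi> x)))"
  shows "level_convex f"
  unfolding level_convex_def
proof (intro allI impI)
  fix \<xi> \<eta> :: 'a and t :: real
  assume t: "0 < t \<and> t < 1"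
  define B where "B = Rd_borel 1"
  define g :: "bool \<Rightarrow> nat \<Rightarrow> real" where "g b = (\<lambda>i\<in>{..<1}. if b then 0 else 1)" for b
  define \<phi> :: "(nat \<Rightarrow> real) \<Rightarrow> 'a" where "\<phi> x = \<xi> + x 0 *\<^sub>R (\<eta> - \<xi>)" for x
  define \<mu> where "\<mu> = distr (bernoulli_pmf t) B g"
  have space_B: "space B = topspace (Rd_top 1)"
    unfolding B_def Rd_borel_def Rd_top_def by (simp add: space_PiM topspace_product_topology)
  have g_meas: "g \<in> measure_pmf (bernoulli_pmf t) \<rightarrow>\<^sub>M B"
    unfolding B_def Rd_borel_def g_def by (simp add: space_PiM)
  have \<phi>_meas: "\<phi> \<in> borel_measurable B" unfolding \<phi>_def B_def Rd_borel_def by measurable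
  have f\<phi>_meas: "(\<lambda>x. ereal (f (\<phi> x))) \<in> borel_measurable B" using \<phi>_meas f by measurable
  have \<mu>: "prob_space \<mu>"
    unfolding \<mu>_def by (rule prob_space.prob_space_distr[OF prob_space_measure_pmf g_meas])
  have "sets \<mu> = sets (Rd_borel 1)" by (simp add: \<mu>_def B_def)
  moreover have "emeasure \<mu> (topspace (Rd_top 1)) = 1"
    using prob_space.emeasure_space_1[OF \<mu>] space_B by (simp add: \<mu>_def)
  moreover have "integrable (completion \<mu>) \<phi>"
    unfolding \<mu>_def using t by (intro integral_completion_distr_bernoulli_pmf(1)[OF g_meas _ _ \<phi>_meas]) auto
  ultimately have "ereal (f (integral\<^sup>L (completion \<mu>) \<phi>)) \<le> esssup (completion \<mu>) (\<lambda>x. ereal (f (\<phi> x)))"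
    by (rule H[OF openin_topspace \<mu>])
  moreover have \<phi>_g: "\<phi> (g True) = \<xi>" "\<phi> (g False) = \<eta>" by (simp_all add: \<phi>_def g_def)
  moreover have "integral\<^sup>L (completion \<mu>) \<phi> = t *\<^sub>R \<xi> + (1 - t) *\<^sub>R \<eta>"
    unfolding \<mu>_def using t \<phi>_g by (subst integral_completion_distr_bernoulli_pmf(2)[OF g_meas _ _ \<phi>_meas]) auto
  ultimately have "ereal (f (t *\<^sub>R \<xi> + (1 - t) *\<^sub>R \<eta>)) \<le> esssup (completion \<mu>) (\<lambda>x. ereal (f (\<phi> x)))"
    by simp
  also have "\<dots> \<le> ereal (max (f \<xi>) (f \<eta>))"
    using esssup_completion_distr_bernoulli_pmf_le[OF g_meas f\<phi>_meas]
    by (simp add: \<mu>_def \<phi>_g)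
  finally show "f (t *\<^sub>R \<xi> + (1 - t) *\<^sub>R \<eta>) \<le> max (f \<xi>) (f \<eta>)"
    by (auto simp: max_def split: if_splits)
qed

theorem mainTheorem20:
  fixes f :: "'a::euclidean_space \<Rightarrow> real"
  assumes "f \<in> borel_measurable borel"
  shows "(level_convex f \<longleftrightarrow>
           (\<forall>d::nat. d \<ge> 1 \<longrightarrow>
             (\<forall>(\<Omega>::(nat \<Rightarrow> real) set) (\<mu>::(nat \<Rightarrow> real) measure) (\<phi>::(nat \<Rightarrow> real) \<Rightarrow> 'a).
                openin (Rd_top d) \<Omega> \<longrightarrow>
                prob_space \<mu> \<longrightarrow>
                sets \<mu> = sets (Rd_borel d) \<longrightarrow>
                emeasure \<mu> \<Omega> = 1 \<longrightarrow>
                integrable (completion \<mu>) \<phi> \<longrightarrow>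
                ereal (f (integral\<^sup>L (completion \<mu>) \<phi>))
                  \<le> esssup (completion \<mu>) (\<lambda>x. ereal (f (\<phi> x))))))
         \<and>
         (level_convex f \<longrightarrow>
           (\<forall>(d::nat) (\<Omega>::(nat \<Rightarrow> real) set) (\<phi>::(nat \<Rightarrow> real) \<Rightarrow> 'a).
              d \<ge> 1 \<longrightarrow>
              openin (Rd_top d) \<Omega> \<longrightarrow>
              0 < emeasure (Rd_lebesgue d) \<Omega> \<longrightarrow>
              emeasure (Rd_lebesgue d) \<Omega> < \<infinity> \<longrightarrow>
              set_integrable (Rd_lebesgue d) \<Omega> \<phi> \<longrightarrow>
              ereal (f ((1 / measure (Rd_lebesgue d) \<Omega>) *\<^sub>R (LINT x:\<Omega>|Rd_lebesgue d. \<phi> x)))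
                \<le> esssup (restrict_space (Rd_lebesgue d) \<Omega>) (\<lambda>x. ereal (f (\<phi> x)))))"
proof (intro conjI iffI allI impI)
  fix d \<Omega> and \<mu> :: "(nat \<Rightarrow> real) measure" and \<phi> :: "(nat \<Rightarrow> real) \<Rightarrow> 'a"
  assume "level_convex f" "prob_space \<mu>" "integrable (completion \<mu>) \<phi>"
  then show "ereal (f (integral\<^sup>L (completion \<mu>) \<phi>)) \<le> esssup (completion \<mu>) (\<lambda>x. ereal (f (\<phi> x)))"
    by (intro prob_space.level_convex_integral_le_esssup prob_space.prob_space_completion)
next
  assume "\<forall>d\<ge>1. \<forall>\<Omega> \<mu> (\<phi>::(nat \<Rightarrow> real) \<Rightarrow> 'a). openin (Rd_top d) \<Omega> \<longrightarrow> prob_space \<mu> \<longrightarrow>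
    sets \<mu> = sets (Rd_borel d) \<longrightarrow> emeasure \<mu> \<Omega> = 1 \<longrightarrow> integrable (completion \<mu>) \<phi> \<longrightarrow>
    ereal (f (integral\<^sup>L (completion \<mu>) \<phi>)) \<le> esssup (completion \<mu>) (\<lambda>x. ereal (f (\<phi> x)))"
  then show "level_convex f"
    by (intro level_convex_if_esssup_bound_on_line[OF assms]) auto
next
  fix d \<Omega> and \<phi> :: "(nat \<Rightarrow> real) \<Rightarrow> 'a"
  assume "level_convex f" "0 < emeasure (Rd_lebesgue d) \<Omega>" "emeasure (Rd_lebesgue d) \<Omega> < \<infinity>"
    "set_integrable (Rd_lebesgue d) \<Omega> \<phi>"
  then show "ereal (f ((1 / measure (Rd_lebesgue d) \<Omega>) *\<^sub>R (LINT x:\<Omega>|Rd_lebesgue d. \<phi> x)))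
               \<le> esssup (restrict_space (Rd_lebesgue d) \<Omega>) (\<lambda>x. ereal (f (\<phi> x)))"
    by (rule level_convex_average_le_esssup)
qed

end
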